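(* Let $I\subset\mathbb R$ be an open interval and $Q,P\colon I\to S^2_0(\mathbb R^4)$ smooth maps with $\det Q(t)<0$ for all $t$, satisfying \[Q'=P,\qquad \big((P^2)_0\big)'=-\frac{4\,(\operatorname{Adj}Q)_0}{\sqrt{-\det Q}},\qquad \operatorname{tr}(P^3)=12\sqrt{-\det Q}.\] Then $Q(t)$ lies in a fixed one-dimensional subspace of $S^2_0(\mathbb R^4)$ for all $t\in I$ if and only if there exist $g\in\mathrm{SO}(4)$ and $t_0\in\mathbb R\setminus I$ such that \[Q(t)=-\frac{(t-t_0)^3}{18\sqrt3}\,gDg^T,\qquad P(t)=-\frac{(t-t_0)^2}{6\sqrt3}\,gDg^T\qquad(t\in I),\] where $D=\operatorname{diag}(-3,1,1,1)$. (This solution corresponds to the $\mathrm{G}_2$ cone metric over $S^3\times S^3$ with its invariant nearly-Kähler structure.)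
   Context: $S^2_0(\mathbb R^4)$ is the space of real symmetric trace-free $4\times4$ matrices; $X_0=X-\frac14(\operatorname{tr}X)I$; $\operatorname{Adj}$ is the adjugate. In the paper, these equations are the matrix form of the $\mathrm{G}_2$ evolution equations $\partial_t\gamma=d\omega$, $\partial_t(\omega^2)=-2d\hat\gamma$ for left-invariant half-flat structures on $S^3\times S^3$ with $[\gamma]=0$, together with the volume normalisation; $P$ encodes $\omega$ and $Q$ a primitive of $\gamma$. *)

theory Defs
  imports "HOL-Analysis.Analysis"
begin

type_synonym mat4 = "real^4^4"

definition smooth_on :: "real set \<Rightarrow> (real \<Rightarrow> 'a::real_normed_vector) \<Rightarrow> bool" where
  "smooth_on I f \<longleftrightarrow> (\<exists>d :: nat \<Rightarrow> real \<Rightarrow> 'a. (\<forall>t\<in>I. d 0 t = f t) \<and>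
      (\<forall>n. \<forall>t\<in>I. (d n has_vector_derivative d (Suc n) t) (at t)))"

definition tracefree :: "mat4 \<Rightarrow> mat4" where
  "tracefree X = X - (trace X / 4) *\<^sub>R mat 1"

text \<open>Adjugate: Adj(A)_{ik} is the (k,i) cofactor, i.e. det of A with row k replaced by e_i.\<close>
definition adjugate :: "mat4 \<Rightarrow> mat4" where
  "adjugate A = (\<chi> i k. det (\<chi> r. if r = k then axis i 1 else A $ r))"

definition S20 :: "mat4 set" where
  "S20 = {X. transpose X = X \<and> trace X = 0}"

definition SO4 :: "mat4 set" where
  "SO4 = {g. orthogonal_matrix g \<and> det g = 1}"

definition Dmat :: mat4 where
  "Dmat = (\<chi> i j. if i = j then (if i = 0 then -3 else 1) else 0)"

end

theory Submission
  imports Defs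
begin

text \<open>
  If \<open>Q\<close> stays on a line, so do \<open>P = Q'\<close> and \<open>(P\<^sup>2)\<^sub>0\<close>, and the second equation makes
  \<open>(Adj Q)\<^sub>0\<close> proportional to \<open>(Q\<^sup>2)\<^sub>0\<close> at any single instant. Tested on an orthonormal
  eigenbasis of \<open>Q\<close>, this says that all four eigenvalues are roots of one cubic
  \<open>\<gamma> x\<^sup>3 + c x = det Q\<close>; zero trace and negative determinant then force the eigenvalues
  \<open>a, a, a, -3a\<close>, i.e. \<open>Q = a g D g\<^sup>T\<close> with \<open>g \<in> SO(4)\<close>. Writing \<open>Q = \<phi> G\<close> and \<open>P = \<psi> G\<close>
  with \<open>G = g D g\<^sup>T\<close>, the remaining equations become \<open>\<phi>' = \<psi>\<close> and
  \<open>\<psi>\<^sup>3 = -(sqrt 3 / 2) \<phi>\<^sup>2\<close>, so the cube root of \<open>\<phi>\<close> is affine in \<open>t\<close>, which is the cone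
  solution.
\<close>

section \<open>Symmetric matrices\<close>

lemma symmetric_matrix_inner:
  fixes A :: "real^'n^'n"
  assumes "transpose A = A"
  shows "inner x (A *v y) = inner (A *v x) y"
  by (metis assms dot_lmul_matrix vector_transpose_matrix)

lemma symmetric_quadratic_form_add_scaleR:
  fixes A :: "real^'n^'n"
  assumes "transpose A = A"
  shows "inner (u + e *\<^sub>R w) (A *v (u + e *\<^sub>R w)) =
     inner u (A *v u) + 2 * e * inner w (A *v u) + e\<^sup>2 * inner w (A *v w)"
proof -
  have "inner u (A *v w) = inner w (A *v u)"
    using symmetric_matrix_inner[OF assms, of u w] by (simp add: inner_commute)
  then show ?thesis
    by (simp add: matrix_vector_right_distrib inner_add_left inner_add_right
        matrix_vector_mult_scaleR algebra_simps power2_eq_square)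
qed

text \<open>First variation: perturbing a maximiser \<open>u\<close> of the Rayleigh quotient in the direction
  \<open>w = A u - \<langle>u, A u\<rangle> u\<close> would increase the quotient at first order, unless \<open>w = 0\<close>.\<close>
lemma rayleigh_maximiser_is_eigenvector:
  fixes A :: "real^'n^'n"
  assumes sym: "transpose A = A" and S: "subspace S" and inv: "\<And>x. x \<in> S \<Longrightarrow> A *v x \<in> S"
    and uS: "u \<in> S" and u1: "inner u u = 1"
    and max: "\<And>y. y \<in> S \<Longrightarrow> inner y (A *v y) \<le> inner u (A *v u) * inner y y"
  shows "A *v u = inner u (A *v u) *\<^sub>R u"
proof -
  define l where "l = inner u (A *v u)"
  define w where "w = A *v u - l *\<^sub>R u"
  have wS: "w \<in> S" using uS inv S unfolding w_def by (auto intro: subspace_diff subspace_scale)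
  have wu: "inner w u = 0"
    unfolding w_def l_def using u1 by (simp add: inner_diff_left inner_diff_right inner_commute)
  have wAu: "inner w (A *v u) = inner w w"
    using wu by (simp add: w_def inner_diff_right inner_diff_left)
  have second_order: "2 * e * inner w w \<le> e\<^sup>2 * (l * inner w w - inner w (A *v w))" for e
  proof -
    have "u + e *\<^sub>R w \<in> S" using uS wS S by (auto intro: subspace_add subspace_scale)
    moreover have "inner (u + e *\<^sub>R w) (A *v (u + e *\<^sub>R w)) = l + 2 * e * inner w w + e\<^sup>2 * inner w (A *v w)"
      using symmetric_quadratic_form_add_scaleR[OF sym, of u e w] wAu l_def by simp
    moreover have "inner (u + e *\<^sub>R w) (u + e *\<^sub>R w) = 1 + e\<^sup>2 * inner w w"
      using u1 wu by (simp add: inner_add_left inner_add_right inner_commute power2_eq_square)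
    ultimately have "l + 2 * e * inner w w + e\<^sup>2 * inner w (A *v w) \<le> l * (1 + e\<^sup>2 * inner w w)"
      using max l_def by metis
    then show ?thesis by (simp add: algebra_simps)
  qed
  have "inner w w = 0"
  proof (rule ccontr)
    assume "inner w w \<noteq> 0"
    then have p: "inner w w > 0" by (simp add: inner_gt_zero_iff)
    define C where "C = l * inner w w - inner w (A *v w)"
    define e where "e = inner w w / (\<bar>C\<bar> + 1)"
    have e0: "e > 0" using p unfolding e_def by simp
    have "2 * e * inner w w \<le> e\<^sup>2 * C" using second_order unfolding C_def .
    then have "2 * inner w w \<le> e * C" using e0 by (simp add: power2_eq_square mult.assoc)
    also have "\<dots> \<le> e * \<bar>C\<bar>" using e0 by (simp add: mult_left_mono)
    also have "\<dots> < inner w w"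
      using p unfolding e_def by (simp add: divide_less_eq field_simps)
    finally show False using p by simp
  qed
  then show ?thesis by (simp add: w_def l_def)
qed

lemma symmetric_eigenvector_in_invariant_subspace:
  fixes A :: "real^'n^'n"
  assumes sym: "transpose A = A" and S: "subspace S" and x0: "x0 \<in> S" "x0 \<noteq> 0"
    and inv: "\<And>x. x \<in> S \<Longrightarrow> A *v x \<in> S"
  obtains u \<mu> where "u \<in> S" "norm u = 1" "A *v u = \<mu> *\<^sub>R u"
proof -
  let ?K = "S \<inter> sphere 0 1"
  let ?f = "\<lambda>u. inner u (A *v u)"
  have "compact ?K"
    using S closed_subspace compact_sphere by (blast intro: closed_Int_compact)
  moreover have "x0 /\<^sub>R norm x0 \<in> ?K"
    using x0 S by (auto simp: subspace_scale)
  moreover have "continuous_on ?K ?f"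
    by (intro continuous_intros continuous_on_compose2[OF matrix_vector_mult_linear_continuous_on])
      (auto intro: continuous_on_id)
  ultimately obtain u where uK: "u \<in> ?K" and umax: "\<And>y. y \<in> ?K \<Longrightarrow> ?f y \<le> ?f u"
    using continuous_attains_sup[of ?K ?f] by blast
  have "?f y \<le> ?f u * inner y y" if "y \<in> S" for y
  proof (cases "y = 0")
    case False
    have "y /\<^sub>R norm y \<in> ?K" using that False S by (auto simp: subspace_scale)
    then have "?f (y /\<^sub>R norm y) \<le> ?f u" using umax by blast
    moreover have "?f (y /\<^sub>R norm y) = ?f y / (norm y)\<^sup>2"
      by (simp add: matrix_vector_mult_scaleR power2_eq_square field_simps)
    ultimately show ?thesis using False by (simp add: divide_le_eq power2_norm_eq_inner mult.commute)
  qed simp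
  then have "A *v u = ?f u *\<^sub>R u"
    using rayleigh_maximiser_is_eigenvector[OF sym S inv] uK by (simp add: dot_square_norm)
  then show ?thesis using that uK by auto
qed

lemma symmetric_eigenvector_orthogonal_to_eigenvectors:
  fixes A :: "real^'n^'n"
  assumes sym: "transpose A = A" and fin: "finite B" and card: "card B < CARD('n)"
    and eig: "\<forall>b\<in>B. \<exists>\<beta>. A *v b = \<beta> *\<^sub>R b"
  obtains u \<mu> where "norm u = 1" "A *v u = \<mu> *\<^sub>R u" "\<forall>b\<in>B. inner b u = 0"
proof -
  let ?S = "{y. \<forall>x\<in>B. orthogonal x y}"
  have "dim B \<le> card B" using dim_le_card[of B B] fin span_superset by auto
  then have "dim B < DIM(real^'n)" using card by simp
  then obtain x0 where x0: "x0 \<noteq> 0" "\<And>y. y \<in> span B \<Longrightarrow> orthogonal x0 y"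
    using orthogonal_to_subspace_exists by blast
  have x0S: "x0 \<in> ?S" using x0(2) span_base orthogonal_commute by blast
  have "A *v y \<in> ?S" if "y \<in> ?S" for y
  proof -
    have "inner b (A *v y) = 0" if "b \<in> B" for b
    proof -
      obtain \<beta> where "A *v b = \<beta> *\<^sub>R b" using eig \<open>b \<in> B\<close> by blast
      then have "inner b (A *v y) = \<beta> * inner b y" by (simp add: symmetric_matrix_inner[OF sym])
      then show ?thesis using \<open>y \<in> ?S\<close> that by (simp add: orthogonal_def)
    qed
    then show ?thesis by (simp add: orthogonal_def)
  qed
  then obtain u \<mu> where "u \<in> ?S" "norm u = 1" "A *v u = \<mu> *\<^sub>R u"
    using symmetric_eigenvector_in_invariant_subspace[OF sym subspace_orthogonal_to_vectors x0S x0(1)]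
    by blast
  then show ?thesis using that by (auto simp: orthogonal_def)
qed

lemma symmetric_orthonormal_eigenvectors:
  fixes A :: "real^'n^'n"
  assumes sym: "transpose A = A" and "k \<le> CARD('n)"
  shows "\<exists>B. finite B \<and> card B = k \<and> pairwise orthogonal B \<and>
            (\<forall>b\<in>B. norm b = 1 \<and> (\<exists>\<beta>. A *v b = \<beta> *\<^sub>R b))"
  using \<open>k \<le> CARD('n)\<close>
proof (induction k)
  case 0
  show ?case by (rule exI[of _ "{}"]) simp
next
  case (Suc k)
  then obtain B where B: "finite B" "card B = k" "pairwise orthogonal B"
    "\<forall>b\<in>B. norm b = 1 \<and> (\<exists>\<beta>. A *v b = \<beta> *\<^sub>R b)" by auto
  obtain u \<mu> where u: "norm u = 1" "A *v u = \<mu> *\<^sub>R u" "\<forall>b\<in>B. inner b u = 0"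
    using symmetric_eigenvector_orthogonal_to_eigenvectors[OF sym B(1)] B Suc.prems
    by (metis Suc_le_lessD)
  then have "u \<notin> B" by (metis inner_eq_zero_iff norm_zero zero_neq_one)
  show ?case
  proof (rule exI[of _ "insert u B"], intro conjI)
    show "card (insert u B) = Suc k" using B \<open>u \<notin> B\<close> by simp
    show "pairwise orthogonal (insert u B)" using B(3) u(3)
      by (auto simp: pairwise_insert orthogonal_def inner_commute)
  qed (use B u in auto)
qed

lemma symmetric_matrix_orthonormal_eigenbasis:
  fixes A :: "real^'n^'n"
  assumes sym: "transpose A = A"
  obtains g \<mu> where "orthogonal_matrix g" "\<And>j. A *v column j g = \<mu> j *\<^sub>R column j g"
proof -
  obtain B where B: "finite B" "card B = CARD('n)" "pairwise orthogonal B"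
      "\<forall>b\<in>B. norm b = 1 \<and> (\<exists>\<beta>. A *v b = \<beta> *\<^sub>R b)"
    using symmetric_orthonormal_eigenvectors[OF sym order_refl] by auto
  obtain f where f: "bij_betw f (UNIV::'n set) B"
    by (metis B(1) B(2) finite_class.finite_UNIV finite_same_card_bij)
  have col: "column j (\<chi> i j. f j $ i) = f j" for j by (simp add: column_def)
  have "\<forall>j. \<exists>\<beta>. A *v f j = \<beta> *\<^sub>R f j" using bij_betwE[OF f] B(4) by blast
  then obtain \<mu> where "\<And>j. A *v f j = \<mu> j *\<^sub>R f j" by metis
  moreover have "orthogonal_matrix (\<chi> i j. f j $ i)"
  proof -
    have "norm (f j) = 1" for j using bij_betwE[OF f] B(4) by blast
    moreover have "orthogonal (f i) (f j)" if "i \<noteq> j" for i j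
      using B(3) f that by (auto simp: pairwise_def bij_betw_def inj_on_def)
    ultimately show ?thesis by (simp add: orthogonal_matrix_orthonormal_columns col)
  qed
  ultimately show ?thesis using that[of "\<chi> i j. f j $ i" \<mu>] col by auto
qed

lemma matrix_diff_ldistrib: "A ** (B - C) = A ** B - A ** (C :: 'a::ring_1^'n^'m)"
  by (simp add: matrix_matrix_mult_def vec_eq_iff sum_subtractf algebra_simps)

lemma matrix_diff_rdistrib: "(B - C) ** A = B ** A - C ** (A :: 'a::ring_1^'n^'m)"
  by (simp add: matrix_matrix_mult_def vec_eq_iff sum_subtractf algebra_simps)

lemma scaleR_matrix_mult_scaleR: "(a *\<^sub>R X) ** (b *\<^sub>R Y) = (a * b) *\<^sub>R (X ** (Y::mat4))"
  by (simp add: matrix_scalar_ac scalar_matrix_assoc mult.commute)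

lemma trace_scaleR: "trace (c *\<^sub>R (A::real^'n^'n)) = c * trace A"
  by (simp add: trace_def sum_distrib_left)

lemma prod_4: "prod f (UNIV::4 set) = f 1 * f 2 * f 3 * f 4"
  unfolding UNIV_4 by (simp add: ac_simps)

lemma det_scaleR_mat4: "det (c *\<^sub>R (A::mat4)) = c ^ 4 * det A"
proof -
  have "c *\<^sub>R A = (\<chi> i. c *s A $ i)" by (simp add: vec_eq_iff)
  then show ?thesis using det_rows_mul[of "\<lambda>_. c" "\<lambda>i. A $ i"] by (simp add: prod_4 power4_eq_xxxx)
qed

lemma tracefree_scaleR: "tracefree (c *\<^sub>R X) = c *\<^sub>R tracefree X"
  by (simp add: tracefree_def trace_scaleR algebra_simps)

lemma tracefree_mult_vector: "tracefree X *v x = X *v x - (trace X / 4) *\<^sub>R x"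
  by (simp add: tracefree_def algebra_simps scaleR_matrix_vector_assoc[symmetric])

lemma diagonal_mult:
  fixes a b :: "'n::finite \<Rightarrow> 'a::semiring_1"
  shows "(\<chi> i j. if i = j then a i else 0) ** (\<chi> i j. if i = j then b i else 0) =
   (\<chi> i j. if i = j then a i * b i else 0)"
proof -
  have "(\<Sum>k\<in>UNIV. (if i = k then a i else 0) * (if k = j then b k else 0)) =
      (\<Sum>k\<in>UNIV. if k = i then a i * (if k = j then b k else 0) else 0)" for i j :: 'n
    by (rule sum.cong) auto
  then show ?thesis by (simp add: matrix_matrix_mult_def vec_eq_iff)
qed

lemma transpose_mult_mult_entry:
  fixes X g :: "real^'n^'n"
  shows "(transpose g ** X ** g) $ i $ j = inner (column i g) (X *v column j g)"
  apply (simp add: matrix_matrix_mult_def matrix_vector_mult_def column_def transpose_def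
      inner_vec_def sum_distrib_left sum_distrib_right)
  apply (subst sum.swap)
  apply (simp add: mult_ac)
  done

lemma orthogonal_conjugate_mult:
  assumes "transpose g ** g = mat 1"
  shows "(g ** X ** transpose g) ** (g ** Y ** transpose g) = g ** (X ** Y) ** transpose g"
proof -
  have "(g ** X ** transpose g) ** (g ** Y ** transpose g) =
      g ** X ** (transpose g ** (g ** Y ** transpose g))"
    by (simp only: matrix_mul_assoc)
  also have "transpose g ** (g ** Y ** transpose g) = Y ** transpose g"
    by (simp only: matrix_mul_assoc assms matrix_mul_lid)
  finally show ?thesis by (simp only: matrix_mul_assoc)
qed

definition outer :: "real^'n \<Rightarrow> real^'n^'n" where
  "outer v = (\<chi> i j. v $ i * v $ j)"

lemma outer_mult_vector: "outer v *v x = inner v x *\<^sub>R v"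
  by (simp add: outer_def matrix_vector_mult_def inner_vec_def vec_eq_iff sum_distrib_left mult_ac)

lemma mult_outer_mult_transpose: "g ** outer v ** transpose g = outer (g *v v)"
  by (simp add: outer_def matrix_matrix_mult_def matrix_vector_mult_def transpose_def vec_eq_iff
      sum_distrib_left sum_distrib_right mult_ac)

lemma orthonormal_eigenbasis_trace_det:
  fixes M g :: "real^'n^'n"
  assumes g: "orthogonal_matrix g" and eig: "\<And>j. M *v column j g = \<mu> j *\<^sub>R column j g"
  shows "trace M = sum \<mu> UNIV" "det M = prod \<mu> UNIV"
proof -
  have gg: "g ** transpose g = mat 1" using g by (simp add: orthogonal_matrix_def)
  have on: "inner (column i g) (column j g) = (if i = j then 1 else 0)" for i j
    using g unfolding orthogonal_matrix_orthonormal_columns by (auto simp: orthogonal_def norm_eq_1)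
  have diag: "transpose g ** M ** g = (\<chi> i j. if i = j then \<mu> j else 0)"
    by (simp add: vec_eq_iff transpose_mult_mult_entry eig on)
  have "trace M = trace (transpose g ** M ** g)"
    by (metis gg matrix_mul_assoc matrix_mul_rid trace_mul_sym)
  then show "trace M = sum \<mu> UNIV" by (simp add: diag trace_def)
  have "det g * det g = 1" using gg by (metis det_I det_mul det_transpose)
  then have "det M = det (transpose g ** M ** g)" by (simp add: det_mul)
  then show "det M = prod \<mu> UNIV" by (simp add: diag det_diagonal)
qed

lemma orthonormal_eigenbasis_two_eigenvalues:
  fixes M g :: "real^'n^'n"
  assumes g: "orthogonal_matrix g" and eig: "\<And>j. M *v column j g = \<mu> j *\<^sub>R column j g"
    and k: "\<mu> k = b" and others: "\<And>j. j \<noteq> k \<Longrightarrow> \<mu> j = a"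
  shows "M = a *\<^sub>R mat 1 + (b - a) *\<^sub>R outer (column k g)"
proof -
  let ?Y = "a *\<^sub>R mat 1 + (b - a) *\<^sub>R outer (column k g)"
  have on: "inner (column k g) (column j g) = (if k = j then 1 else 0)" for j
    using g unfolding orthogonal_matrix_orthonormal_columns by (auto simp: orthogonal_def norm_eq_1)
  have "M *v column j g = ?Y *v column j g" for j
    using k others[of j] by (cases "j = k")
      (simp_all add: eig on outer_mult_vector matrix_vector_mult_add_rdistrib
        scaleR_matrix_vector_assoc[symmetric] algebra_simps)
  then have "M ** g = ?Y ** g"
    by (simp add: vec_eq_iff column_def matrix_matrix_mult_def matrix_vector_mult_def)
  then have "M ** (g ** transpose g) = ?Y ** (g ** transpose g)"
    by (simp add: matrix_mul_assoc)
  then show ?thesis using g by (simp add: orthogonal_matrix_def)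
qed

lemma adjugate_entry_mult:
  fixes A :: "real^'n^'n"
  shows "(A ** (\<chi> i k. det (\<chi> r. if r = k then axis i 1 else A $ r))) $ r $ k
         = det (\<chi> s. if s = k then A $ r else A $ s)"
proof -
  have "(A ** (\<chi> i k. det (\<chi> r. if r = k then axis i 1 else A $ r))) $ r $ k
      = (\<Sum>i\<in>UNIV. det (\<chi> s. if s = k then (A$r$i) *s axis i 1 else A $ s))"
    by (simp add: matrix_matrix_mult_def det_row_mul)
  also have "\<dots> = det (\<chi> s. if s = k then (\<Sum>i\<in>UNIV. (A$r$i) *s axis i 1) else A $ s)"
    by (rule det_linear_row_sum[symmetric]) simp
  also have "\<dots> = det (\<chi> s. if s = k then A $ r else A $ s)"
    by (simp only: basis_expansion)
  finally show ?thesis .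
qed

lemma matrix_mult_adjugate: "A ** adjugate A = det A *\<^sub>R mat 1"
proof -
  have "(A ** adjugate A) $ r $ k = (det A *\<^sub>R (mat 1::mat4)) $ r $ k" for r k
  proof (cases "r = k")
    case True
    then have "(\<chi> s. if s = k then A $ r else A $ s) = A" by (simp add: vec_eq_iff)
    then show ?thesis using True adjugate_entry_mult[of A r k] by (simp add: adjugate_def mat_def)
  next
    case False
    have "det (\<chi> s. if s = k then A $ r else A $ s) = 0"
      by (rule det_identical_rows[of r k]) (use False in \<open>auto simp: row_def vec_eq_iff\<close>)
    then show ?thesis using False adjugate_entry_mult[of A r k] by (simp add: adjugate_def mat_def)
  qed
  then show ?thesis by (simp add: vec_eq_iff)
qed

section \<open>Spectrum of a collinear solution\<close>

text \<open>Sandwich the hypothesis between \<open>u\<close> and \<open>u\<close> and use \<open>M ** adjugate M = det M *\<^sub>R mat 1\<close>;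
  the coefficients of the resulting cubic do not depend on the eigenvector.\<close>
lemma eigenvalue_cubic:
  fixes M :: mat4
  assumes sym: "transpose M = M" and eig: "M *v u = \<kappa> *\<^sub>R u" and u1: "inner u u = 1"
    and ad: "tracefree (adjugate M) = \<gamma> *\<^sub>R tracefree (M ** M)"
  shows "\<gamma> * \<kappa>^3 + (trace (adjugate M) / 4 - \<gamma> * trace (M ** M) / 4) * \<kappa> = det M"
proof -
  define a where "a = inner u (adjugate M *v u)"
  have "inner u (M *v (adjugate M *v u)) = det M"
    by (simp add: matrix_vector_mul_assoc matrix_mult_adjugate
        scaleR_matrix_vector_assoc[symmetric] u1)
  then have det: "\<kappa> * a = det M" by (simp add: symmetric_matrix_inner[OF sym] eig a_def)
  have "inner u ((M ** M) *v u) = \<kappa>\<^sup>2"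
    by (simp add: matrix_vector_mul_assoc[symmetric] eig matrix_vector_mult_scaleR u1
        power2_eq_square)
  moreover have "inner u (tracefree (adjugate M) *v u) = \<gamma> * inner u (tracefree (M ** M) *v u)"
    by (simp add: ad scaleR_matrix_vector_assoc[symmetric])
  ultimately have "a - trace (adjugate M) / 4 = \<gamma> * (\<kappa>\<^sup>2 - trace (M ** M) / 4)"
    by (simp add: tracefree_mult_vector inner_diff_right u1 a_def)
  then have a_eq: "a = \<gamma> * (\<kappa>\<^sup>2 - trace (M ** M) / 4) + trace (adjugate M) / 4"
    by simp
  show ?thesis
    unfolding det[symmetric] a_eq by (simp add: algebra_simps power2_eq_square power3_eq_cube)
qed

lemma cubic_distinct_roots_sum:
  fixes x y z :: real
  assumes "g * x^3 + c * x = d" "g * y^3 + c * y = d" "g * z^3 + c * z = d"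
    and "x \<noteq> y" "x \<noteq> z" "y \<noteq> z" "g \<noteq> 0"
  shows "x + y + z = 0"
proof -
  have pair: "g * (a\<^sup>2 + a * b + b\<^sup>2) + c = 0"
    if "g * a^3 + c * a = d" "g * b^3 + c * b = d" "a \<noteq> b" for a b :: real
  proof -
    have "(a - b) * (g * (a\<^sup>2 + a * b + b\<^sup>2) + c) = 0"
      using that by (simp add: algebra_simps power2_eq_square power3_eq_cube)
    then show ?thesis using \<open>a \<noteq> b\<close> by simp
  qed
  have "g * ((y - z) * (x + y + z)) = 0"
    using pair[of x y] pair[of x z] assms by (simp add: algebra_simps power2_eq_square)
  then show ?thesis using assms by simp
qed

text \<open>Three distinct roots of the cubic would sum to zero and force the fourth number to vanish,
  and two equal pairs \<open>a, a, -a, -a\<close> have nonnegative product.\<close>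
lemma four_cubic_roots_three_equal:
  fixes \<mu> :: "4 \<Rightarrow> real"
  assumes sum: "sum \<mu> UNIV = 0" and neg: "prod \<mu> UNIV < 0"
    and cubic: "\<And>j. \<gamma> * \<mu> j ^ 3 + c * \<mu> j = prod \<mu> UNIV"
  shows "\<exists>k a. \<forall>j. j \<noteq> k \<longrightarrow> \<mu> j = a"
proof -
  define d where "d = prod \<mu> UNIV"
  have s: "\<mu> 1 + \<mu> 2 + \<mu> 3 + \<mu> 4 = 0" using sum by (simp add: sum_4)
  have p: "\<mu> 1 * \<mu> 2 * \<mu> 3 * \<mu> 4 = d" unfolding d_def prod_4 ..
  have d: "d < 0" using neg d_def by simp
  have \<gamma>: "\<gamma> \<noteq> 0"
  proof
    assume "\<gamma> = 0"
    then have "c * (\<mu> 1 + \<mu> 2 + \<mu> 3 + \<mu> 4) = 4 * d"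
      using cubic[of 1] cubic[of 2] cubic[of 3] cubic[of 4] by (simp add: d_def algebra_simps)
    then show False using s d by simp
  qed
  have triple: "\<mu> i = \<mu> j \<or> \<mu> i = \<mu> k \<or> \<mu> j = \<mu> k"
    if "\<mu> i + \<mu> j + \<mu> k + \<mu> l = 0" "\<mu> i * \<mu> j * \<mu> k * \<mu> l = d" for i j k l
  proof (rule ccontr)
    assume "\<not> ?thesis"
    then have "\<mu> i + \<mu> j + \<mu> k = 0"
      using cubic_distinct_roots_sum[OF cubic cubic cubic _ _ _ \<gamma>] by blast
    then show False using that d by simp
  qed
  have pairs: "\<mu> i = \<mu> k"
    if "\<mu> i = \<mu> j" "\<mu> k = \<mu> l" "\<mu> i + \<mu> j + \<mu> k + \<mu> l = 0" "\<mu> i * \<mu> j * \<mu> k * \<mu> l = d"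
    for i j k l
  proof -
    have "\<mu> i * \<mu> j * \<mu> k * \<mu> l = (\<mu> i * \<mu> k)\<^sup>2"
      using that(1-3) by (simp add: power2_eq_square)
    then show ?thesis using that(4) d by simp
  qed
  have "\<mu> 1 = \<mu> 2 \<or> \<mu> 1 = \<mu> 3 \<or> \<mu> 2 = \<mu> 3" "\<mu> 1 = \<mu> 2 \<or> \<mu> 1 = \<mu> 4 \<or> \<mu> 2 = \<mu> 4"
    "\<mu> 1 = \<mu> 3 \<or> \<mu> 1 = \<mu> 4 \<or> \<mu> 3 = \<mu> 4" "\<mu> 2 = \<mu> 3 \<or> \<mu> 2 = \<mu> 4 \<or> \<mu> 3 = \<mu> 4"
    using triple[of 1 2 3 4] triple[of 1 2 4 3] triple[of 1 3 4 2] triple[of 2 3 4 1] s p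
    by (simp_all add: algebra_simps)
  moreover have "\<mu> 1 = \<mu> 2 \<Longrightarrow> \<mu> 3 = \<mu> 4 \<Longrightarrow> \<mu> 1 = \<mu> 3"
    "\<mu> 1 = \<mu> 3 \<Longrightarrow> \<mu> 2 = \<mu> 4 \<Longrightarrow> \<mu> 1 = \<mu> 2" "\<mu> 1 = \<mu> 4 \<Longrightarrow> \<mu> 2 = \<mu> 3 \<Longrightarrow> \<mu> 1 = \<mu> 2"
    using pairs[of 1 2 3 4] pairs[of 1 3 2 4] pairs[of 1 4 2 3] s p by (simp_all add: algebra_simps)
  ultimately have "(\<mu> 2 = \<mu> 1 \<and> \<mu> 3 = \<mu> 1) \<or> (\<mu> 2 = \<mu> 1 \<and> \<mu> 4 = \<mu> 1) \<or>
      (\<mu> 3 = \<mu> 1 \<and> \<mu> 4 = \<mu> 1) \<or> (\<mu> 3 = \<mu> 2 \<and> \<mu> 4 = \<mu> 2)"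
    by metis
  then show ?thesis unfolding forall_4 by metis
qed

lemma four_cubic_roots_pattern:
  fixes \<mu> :: "4 \<Rightarrow> real"
  assumes sum: "sum \<mu> UNIV = 0" and neg: "prod \<mu> UNIV < 0"
    and cubic: "\<And>j. \<gamma> * \<mu> j ^ 3 + c * \<mu> j = prod \<mu> UNIV"
  obtains a k where "a \<noteq> 0" "\<mu> k = -3 * a" "\<And>j. j \<noteq> k \<Longrightarrow> \<mu> j = a"
proof -
  obtain k a where k: "\<And>j. j \<noteq> k \<Longrightarrow> \<mu> j = a"
    using four_cubic_roots_three_equal[OF sum neg cubic] by blast
  have "sum \<mu> UNIV = \<mu> k + 3 * a"
    using sum.remove[of UNIV k \<mu>] k by simp
  moreover have "prod \<mu> UNIV = \<mu> k * a ^ 3"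
    using prod.remove[of UNIV k \<mu>] k by simp
  ultimately have "\<mu> k = -3 * a" "a \<noteq> 0" using sum neg by auto
  then show thesis using that k by blast
qed

section \<open>Conjugates of D\<close>

lemma Dmat_eq_outer: "Dmat = mat 1 - 4 *\<^sub>R outer (axis 0 1)"
  by (simp add: Dmat_def outer_def mat_def axis_def vec_eq_iff)

lemma Dmat_properties:
  "transpose Dmat = Dmat" "trace Dmat = 0" "det Dmat = -3" "trace (Dmat ** Dmat ** Dmat) = -24"
proof -
  have cube: "Dmat ** Dmat ** Dmat = (\<chi> i j. if i = j then (if i = 0 then -27 else 1) else 0)"
    by (simp add: Dmat_def diagonal_mult vec_eq_iff)
  show "transpose Dmat = Dmat" by (simp add: Dmat_def transpose_def vec_eq_iff)
  show "trace Dmat = 0" by (simp add: Dmat_def trace_def sum_4)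
  show "det Dmat = -3" by (subst det_diagonal) (simp_all add: Dmat_def prod_4)
  show "trace (Dmat ** Dmat ** Dmat) = -24" unfolding cube by (simp add: trace_def sum_4)
qed

lemma SO4_conjugate_Dmat:
  assumes "g \<in> SO4"
  defines "G \<equiv> g ** Dmat ** transpose g"
  shows "G \<in> S20" "det G = -3" "trace (G ** G ** G) = -24"
proof -
  have g: "transpose g ** g = mat 1" "det g = 1" using assms by (auto simp: SO4_def orthogonal_matrix_def)
  have trace_conj: "trace (g ** X ** transpose g) = trace X" for X :: mat4
    by (metis g(1) matrix_mul_assoc matrix_mul_lid trace_mul_sym)
  have "G ** G ** G = g ** (Dmat ** Dmat ** Dmat) ** transpose g"
    by (simp only: G_def orthogonal_conjugate_mult[OF g(1)])
  then show "trace (G ** G ** G) = -24" by (simp add: trace_conj Dmat_properties)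
  show "G \<in> S20"
    by (simp add: S20_def G_def trace_conj Dmat_properties matrix_transpose_mul matrix_mul_assoc)
  show "det G = -3" using g by (simp add: G_def det_mul Dmat_properties)
qed

lemma SO4_conjugate_Dmat_line:
  assumes "g \<in> SO4"
  defines "G \<equiv> g ** Dmat ** transpose g"
  shows "subspace (span {G}) \<and> span {G} \<subseteq> S20 \<and> dim (span {G}) = 1"
proof -
  note G = SO4_conjugate_Dmat[OF assms(1), folded G_def]
  have "G \<noteq> 0" using G(2) by (auto simp: det_scaleR_mat4[of 0, simplified])
  moreover have "subspace S20"
    unfolding subspace_def S20_def
    by (auto simp: transpose_def vec_eq_iff trace_def sum.distrib simp flip: sum_distrib_left)
  ultimately show ?thesis using G(1) by (simp add: span_minimal dim_eq_card_independent)
qed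

lemma tracefree_adjugate_collinear_imp_Dmat_conjugate:
  fixes M :: mat4
  assumes M: "M \<in> S20" and neg: "det M < 0"
    and ad: "tracefree (adjugate M) \<in> span {tracefree (M ** M)}"
  obtains a g where "a \<noteq> 0" "g \<in> SO4" "M = a *\<^sub>R (g ** Dmat ** transpose g)"
proof -
  obtain \<gamma> where \<gamma>: "tracefree (adjugate M) = \<gamma> *\<^sub>R tracefree (M ** M)"
    using ad by (auto simp: span_singleton)
  have sym: "transpose M = M" and tr: "trace M = 0" using M by (auto simp: S20_def)
  obtain g \<mu> where g: "orthogonal_matrix g" and eig: "\<And>j. M *v column j g = \<mu> j *\<^sub>R column j g"
    using symmetric_matrix_orthonormal_eigenbasis[OF sym] by blast
  have unit: "norm (column j g) = 1" for j
    using g by (simp add: orthogonal_matrix_orthonormal_columns)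
  note trace_det = orthonormal_eigenbasis_trace_det[OF g eig]
  have "\<gamma> * \<mu> j ^ 3 + (trace (adjugate M) / 4 - \<gamma> * trace (M ** M) / 4) * \<mu> j = prod \<mu> UNIV" for j
    using eigenvalue_cubic[OF sym eig _ \<gamma>] unit[of j] trace_det by (simp add: norm_eq_1)
  then obtain a k where a: "a \<noteq> 0" and k: "\<mu> k = -3 * a" "\<And>j. j \<noteq> k \<Longrightarrow> \<mu> j = a"
    using four_cubic_roots_pattern[of \<mu>] trace_det tr neg by metis
  have "M = a *\<^sub>R mat 1 + (-3 * a - a) *\<^sub>R outer (column k g)"
    by (rule orthonormal_eigenbasis_two_eigenvalues[OF g eig k])
  also have "\<dots> = a *\<^sub>R (mat 1 - 4 *\<^sub>R outer (column k g))"
    by (simp add: algebra_simps)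
  finally have M_outer: "M = a *\<^sub>R (mat 1 - 4 *\<^sub>R outer (column k g))" .
  obtain h where h: "rotation_matrix h" "h *v axis 0 1 = column k g"
    using rotation_matrix_exists_basis[of "column k g" 0] unit by auto
  then have "h ** Dmat ** transpose h = mat 1 - 4 *\<^sub>R outer (column k g)"
    by (simp add: Dmat_eq_outer matrix_diff_ldistrib matrix_diff_rdistrib matrix_scalar_ac
        scalar_matrix_assoc[symmetric] mult_outer_mult_transpose rotation_matrix_def
        orthogonal_matrix_def)
  moreover have "h \<in> SO4" using h(1) by (simp add: SO4_def rotation_matrix_def)
  ultimately show ?thesis using that a M_outer by metis
qed

lemma Dmat_conjugate_profile_equation:
  assumes g: "g \<in> SO4"
  defines "G \<equiv> g ** Dmat ** transpose g"
  assumes neg: "det (x *\<^sub>R G) < 0"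
    and eq3: "trace ((y *\<^sub>R G) ** (y *\<^sub>R G) ** (y *\<^sub>R G)) = 12 * sqrt (- det (x *\<^sub>R G))"
  shows "x \<noteq> 0" "y ^ 3 = - (sqrt 3 / 2) * x\<^sup>2"
proof -
  note G = SO4_conjugate_Dmat[OF g, folded G_def]
  have det: "- det (x *\<^sub>R G) = 3 * (x\<^sup>2)\<^sup>2"
    by (simp add: det_scaleR_mat4 G)
  have tr: "trace ((y *\<^sub>R G) ** (y *\<^sub>R G) ** (y *\<^sub>R G)) = - 24 * y ^ 3"
    by (simp add: scaleR_matrix_mult_scaleR trace_scaleR G power3_eq_cube)
  show "x \<noteq> 0" using neg det by auto
  have "sqrt (- det (x *\<^sub>R G)) = sqrt 3 * x\<^sup>2"
    unfolding det real_sqrt_mult real_sqrt_abs abs_power2 ..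
  then show "y ^ 3 = - (sqrt 3 / 2) * x\<^sup>2" using eq3 tr by simp
qed

section \<open>Curves in a line\<close>

lemma span_singleton_coordinate:
  fixes x v :: "'a::real_inner"
  assumes "x \<in> span {v}"
  shows "x = (inner x v / inner v v) *\<^sub>R v"
proof -
  obtain k where "x = k *\<^sub>R v" using assms by (auto simp: span_singleton)
  then show ?thesis by (cases "v = 0") auto
qed

lemma span_singleton_scaleR_iff:
  fixes x :: "'a::real_vector"
  assumes "c \<noteq> 0"
  shows "c *\<^sub>R x \<in> span {v} \<longleftrightarrow> x \<in> span {v}"
  using assms span_mul[of "c *\<^sub>R x" "{v}" "inverse c"] span_mul[of x "{v}" c] by auto

lemma has_vector_derivative_in_span_singleton:
  fixes f :: "real \<Rightarrow> 'a::real_inner"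
  assumes I: "open I" "t \<in> I" and f: "\<forall>s\<in>I. f s \<in> span {v}"
    and der: "(f has_vector_derivative f') (at t)"
  shows "f' \<in> span {v}"
proof -
  let ?c = "\<lambda>x. inner x v / inner v v"
  have "bounded_linear ?c"
    by (rule bounded_linear_compose[OF bounded_linear_divide bounded_linear_inner_left])
  from bounded_linear.has_vector_derivative[OF this der]
  have "((\<lambda>s. ?c (f s)) has_real_derivative ?c f') (at t)"
    by (simp add: has_real_derivative_iff_has_vector_derivative)
  from has_vector_derivative_scaleR[OF this has_vector_derivative_const[of v]]
  have "((\<lambda>s. ?c (f s) *\<^sub>R v) has_vector_derivative ?c f' *\<^sub>R v) (at t)"
    by simp
  then have "(f has_vector_derivative ?c f' *\<^sub>R v) (at t)"
    by (rule has_vector_derivative_transform_within_open[OF _ I])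
      (use f span_singleton_coordinate in metis)
  then have "f' = ?c f' *\<^sub>R v" using der vector_derivative_unique_at by blast
  then show ?thesis by (metis span_base span_mul singletonI)
qed

lemma curve_in_span_singleton:
  fixes f :: "real \<Rightarrow> 'a::real_inner"
  assumes I: "open I" and f: "\<forall>t\<in>I. f t \<in> span {v}"
    and der: "\<forall>t\<in>I. (f has_vector_derivative f' t) (at t)"
  obtains \<phi> \<psi> where
    "\<forall>t\<in>I. f t = \<phi> t *\<^sub>R v \<and> f' t = \<psi> t *\<^sub>R v \<and> (\<phi> has_real_derivative \<psi> t) (at t)"
proof
  let ?c = "\<lambda>x. inner x v / inner v v"
  have c: "bounded_linear ?c"
    by (rule bounded_linear_compose[OF bounded_linear_divide bounded_linear_inner_left])
  show "\<forall>t\<in>I. f t = ?c (f t) *\<^sub>R v \<and> f' t = ?c (f' t) *\<^sub>R v \<and>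
      ((\<lambda>s. ?c (f s)) has_real_derivative ?c (f' t)) (at t)"
  proof
    fix t assume t: "t \<in> I"
    have "f' t \<in> span {v}" using has_vector_derivative_in_span_singleton[OF I t f] der t by blast
    moreover have "((\<lambda>s. ?c (f s)) has_real_derivative ?c (f' t)) (at t)"
      using bounded_linear.has_vector_derivative[OF c] der t
      by (simp add: has_real_derivative_iff_has_vector_derivative)
    ultimately show "f t = ?c (f t) *\<^sub>R v \<and> f' t = ?c (f' t) *\<^sub>R v \<and>
        ((\<lambda>s. ?c (f s)) has_real_derivative ?c (f' t)) (at t)"
      using f t span_singleton_coordinate by blast
  qed
qed

section \<open>The profile equation\<close>

lemma real_cube_eq_iff: "x ^ 3 = y ^ 3 \<longleftrightarrow> x = (y::real)"
  by (metis odd_real_root_power_cancel odd_numeral)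

lemma cube_root_has_derivative_const:
  fixes \<phi> :: "real \<Rightarrow> real"
  assumes der: "(\<phi> has_real_derivative y) (at t)" and nz: "\<phi> t \<noteq> 0"
    and eq: "y ^ 3 = - 27 * c ^ 3 * (\<phi> t)\<^sup>2"
  shows "((\<lambda>s. root 3 (\<phi> s)) has_real_derivative - c) (at t)"
proof -
  define \<rho> where "\<rho> = root 3 (\<phi> t)"
  have \<rho>: "\<rho> ^ 3 = \<phi> t" "\<rho> \<noteq> 0" using nz by (simp_all add: \<rho>_def odd_real_root_pow)
  have "(- 3 * c * \<rho>\<^sup>2) ^ 3 = y ^ 3"
    by (simp add: eq \<rho>(1)[symmetric] power_mult_distrib power_mult[symmetric])
  then have y: "y = - 3 * c * \<rho>\<^sup>2" using real_cube_eq_iff by metis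
  have "DERIV (root 3) (\<phi> t) :> inverse (real 3 * \<rho> ^ (3 - Suc 0))"
    unfolding \<rho>_def by (rule DERIV_real_root_generic) (use nz in auto)
  moreover have "inverse (real 3 * \<rho> ^ (3 - Suc 0)) * y = - c"
    using \<rho>(2) by (simp add: y power2_eq_square divide_simps)
  ultimately show ?thesis using DERIV_chain2[OF _ der] by metis
qed

lemma cubic_ode_solution:
  fixes \<phi> \<psi> :: "real \<Rightarrow> real"
  assumes I: "is_interval I" and "c \<noteq> 0"
    and der: "\<And>t. t \<in> I \<Longrightarrow> (\<phi> has_real_derivative \<psi> t) (at t)"
    and nz: "\<And>t. t \<in> I \<Longrightarrow> \<phi> t \<noteq> 0"
    and eq: "\<And>t. t \<in> I \<Longrightarrow> \<psi> t ^ 3 = - 27 * c ^ 3 * (\<phi> t)\<^sup>2"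
  obtains t0 where "t0 \<notin> I"
    "\<And>t. t \<in> I \<Longrightarrow> \<phi> t = c ^ 3 * (t0 - t) ^ 3 \<and> \<psi> t = - 3 * c ^ 3 * (t0 - t)\<^sup>2"
proof -
  have "((\<lambda>s. root 3 (\<phi> s) + c * s) has_real_derivative 0) (at t within I)" if "t \<in> I" for t
    using DERIV_add[OF cube_root_has_derivative_const[OF der nz eq] DERIV_cmult_Id[of c]] that
    by (simp add: has_field_derivative_at_within)
  then obtain C where C: "\<forall>t\<in>I. root 3 (\<phi> t) + c * t = C"
    using has_field_derivative_zero_constant[OF is_interval_convex[OF I],
        of "\<lambda>s. root 3 (\<phi> s) + c * s"] by blast
  define t0 where "t0 = C / c"
  have \<phi>: "\<phi> t = c ^ 3 * (t0 - t) ^ 3" if "t \<in> I" for t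
  proof -
    have "root 3 (\<phi> t) = C - c * t" using C that by (simp add: eq_diff_eq)
    also have "\<dots> = c * (t0 - t)" using \<open>c \<noteq> 0\<close> by (simp add: t0_def right_diff_distrib)
    finally have "root 3 (\<phi> t) = c * (t0 - t)" .
    then have "root 3 (\<phi> t) ^ 3 = (c * (t0 - t)) ^ 3" by simp
    then show ?thesis by (simp add: odd_real_root_pow power_mult_distrib)
  qed
  have \<psi>: "\<psi> t = - 3 * c ^ 3 * (t0 - t)\<^sup>2" if "t \<in> I" for t
  proof -
    have "\<psi> t ^ 3 = (- 3 * c ^ 3 * (t0 - t)\<^sup>2) ^ 3"
      using eq[OF that] \<phi>[OF that] by (simp add: power_mult_distrib power_mult[symmetric])
    then show ?thesis using real_cube_eq_iff by metis
  qed
  have "t0 \<notin> I" using \<phi>[of t0] nz[of t0] by auto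
  then show ?thesis using that \<phi> \<psi> by blast
qed

lemma cone_profile_ode:
  fixes \<phi> \<psi> :: "real \<Rightarrow> real"
  assumes I: "is_interval I"
    and der: "\<And>t. t \<in> I \<Longrightarrow> (\<phi> has_real_derivative \<psi> t) (at t)"
    and nz: "\<And>t. t \<in> I \<Longrightarrow> \<phi> t \<noteq> 0"
    and eq: "\<And>t. t \<in> I \<Longrightarrow> \<psi> t ^ 3 = - (sqrt 3 / 2) * (\<phi> t)\<^sup>2"
  obtains t0 where "t0 \<notin> I"
    "\<And>t. t \<in> I \<Longrightarrow> \<phi> t = - ((t - t0) ^ 3 / (18 * sqrt 3)) \<and> \<psi> t = - ((t - t0)\<^sup>2 / (6 * sqrt 3))"
proof -
  define c where "c = root 3 (sqrt 3 / 54)"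
  have c3: "c ^ 3 = 1 / (18 * sqrt 3)"
  proof -
    have "sqrt 3 / 54 = 1 / (18 * sqrt (3::real))"
      by (simp add: field_simps flip: power2_eq_square)
    then show ?thesis by (simp add: c_def odd_real_root_pow)
  qed
  have "c \<noteq> 0" using c3 by auto
  moreover have "27 * c ^ 3 = sqrt 3 / 2"
    by (simp add: c3 field_simps real_sqrt_mult_self flip: power2_eq_square)
  then have "\<psi> t ^ 3 = - 27 * c ^ 3 * (\<phi> t)\<^sup>2" if "t \<in> I" for t
    using eq[OF that] by simp
  ultimately obtain t0 where "t0 \<notin> I"
    and sol: "\<And>t. t \<in> I \<Longrightarrow> \<phi> t = c ^ 3 * (t0 - t) ^ 3 \<and> \<psi> t = - 3 * c ^ 3 * (t0 - t)\<^sup>2"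
    using cubic_ode_solution[OF I _ der nz] by metis
  have "(t0 - t) ^ 3 = - ((t - t0) ^ 3)" "(t0 - t)\<^sup>2 = (t - t0)\<^sup>2" for t
    by (simp_all add: power3_eq_cube power2_eq_square algebra_simps)
  then have "c ^ 3 * (t0 - t) ^ 3 = - ((t - t0) ^ 3 / (18 * sqrt 3))"
    and "- 3 * c ^ 3 * (t0 - t)\<^sup>2 = - ((t - t0)\<^sup>2 / (6 * sqrt 3))" for t
    by (simp_all add: c3)
  with sol show ?thesis using that[OF \<open>t0 \<notin> I\<close>] by simp
qed

text \<open>The second evolution equation at a single instant \<open>t\<^sub>1\<close> already pins down the line:
  \<open>tracefree (P ** P)\<close> moves inside the line spanned by \<open>tracefree (A ** A)\<close>, hence so does
  its derivative, which is a nonzero multiple of \<open>tracefree (adjugate (Q t\<^sub>1))\<close>.\<close>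
lemma collinear_solution_direction:
  fixes Q P :: "real \<Rightarrow> mat4"
  assumes I: "open I" and t1: "t1 \<in> I"
    and QS: "\<forall>t\<in>I. Q t \<in> S20" and detQ: "\<forall>t\<in>I. det (Q t) < 0"
    and eq1: "\<forall>t\<in>I. (Q has_vector_derivative P t) (at t)"
    and eq2: "\<forall>t\<in>I. ((\<lambda>s. tracefree (P s ** P s)) has_vector_derivative
                 (- (4 / sqrt (- det (Q t)))) *\<^sub>R tracefree (adjugate (Q t))) (at t)"
    and line: "\<forall>t\<in>I. Q t \<in> span {A}"
  obtains g where "g \<in> SO4" "\<forall>t\<in>I. Q t \<in> span {g ** Dmat ** transpose g}"
proof -
  obtain q p where qp: "\<forall>t\<in>I. Q t = q t *\<^sub>R A \<and> P t = p t *\<^sub>R A"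
    using curve_in_span_singleton[OF I line eq1] by metis
  define M where "M = Q t1"
  have neg: "det M < 0" using detQ t1 by (simp add: M_def)
  have M: "M = q t1 *\<^sub>R A" using qp t1 by (simp add: M_def)
  then have q1: "q t1 \<noteq> 0" using neg by (auto simp: det_scaleR_mat4)
  have "\<forall>s\<in>I. tracefree (P s ** P s) \<in> span {tracefree (A ** A)}"
    using qp by (simp add: scaleR_matrix_mult_scaleR tracefree_scaleR span_mul span_base)
  from has_vector_derivative_in_span_singleton[OF I t1 this] eq2 t1
  have "(- (4 / sqrt (- det M))) *\<^sub>R tracefree (adjugate M) \<in> span {tracefree (A ** A)}"
    by (simp add: M_def)
  moreover have "- (4 / sqrt (- det M)) \<noteq> 0" using neg by simp
  ultimately obtain k where "tracefree (adjugate M) = k *\<^sub>R tracefree (A ** A)"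
    using span_singleton_scaleR_iff by (metis span_singleton_coordinate)
  moreover have "tracefree (M ** M) = (q t1)\<^sup>2 *\<^sub>R tracefree (A ** A)"
    by (simp add: M scaleR_matrix_mult_scaleR tracefree_scaleR power2_eq_square)
  ultimately have "tracefree (adjugate M) = (k / (q t1)\<^sup>2) *\<^sub>R tracefree (M ** M)"
    using q1 by simp
  then have "tracefree (adjugate M) \<in> span {tracefree (M ** M)}"
    by (simp add: span_mul span_base)
  moreover have "M \<in> S20" using QS t1 by (simp add: M_def)
  ultimately obtain a g where "g \<in> SO4" "M = a *\<^sub>R (g ** Dmat ** transpose g)"
    using tracefree_adjugate_collinear_imp_Dmat_conjugate neg by metis
  moreover have "A = inverse (q t1) *\<^sub>R M" using M q1 by simp
  ultimately have "A \<in> span {g ** Dmat ** transpose g}" by (simp add: span_mul span_base)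
  then have "\<forall>t\<in>I. Q t \<in> span {g ** Dmat ** transpose g}"
    using qp by (simp add: span_mul)
  then show ?thesis using that \<open>g \<in> SO4\<close> by blast
qed

lemma collinear_solution_is_cone:
  fixes Q P :: "real \<Rightarrow> mat4"
  assumes I_open: "open I" and I_int: "is_interval I" and I_ne: "I \<noteq> {}"
    and QS: "\<forall>t\<in>I. Q t \<in> S20" and detQ: "\<forall>t\<in>I. det (Q t) < 0"
    and eq1: "\<forall>t\<in>I. (Q has_vector_derivative P t) (at t)"
    and eq2: "\<forall>t\<in>I. ((\<lambda>s. tracefree (P s ** P s)) has_vector_derivative
                 (- (4 / sqrt (- det (Q t)))) *\<^sub>R tracefree (adjugate (Q t))) (at t)"
    and eq3: "\<forall>t\<in>I. trace (P t ** P t ** P t) = 12 * sqrt (- det (Q t))"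
    and line: "\<forall>t\<in>I. Q t \<in> span {A}"
  shows "\<exists>g\<in>SO4. \<exists>t0. t0 \<notin> I \<and>
            (\<forall>t\<in>I. Q t = (- ((t - t0) ^ 3 / (18 * sqrt 3))) *\<^sub>R (g ** Dmat ** transpose g) \<and>
                    P t = (- ((t - t0) ^ 2 / (6 * sqrt 3))) *\<^sub>R (g ** Dmat ** transpose g))"
proof -
  obtain t1 where "t1 \<in> I" using I_ne by blast
  with collinear_solution_direction[OF I_open _ QS detQ eq1 eq2 line]
  obtain g where g: "g \<in> SO4" "\<forall>t\<in>I. Q t \<in> span {g ** Dmat ** transpose g}" by blast
  then obtain \<phi> \<psi> where sol: "\<forall>t\<in>I. Q t = \<phi> t *\<^sub>R (g ** Dmat ** transpose g) \<and>
      P t = \<psi> t *\<^sub>R (g ** Dmat ** transpose g) \<and> (\<phi> has_real_derivative \<psi> t) (at t)"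
    using curve_in_span_singleton[OF I_open _ eq1] by metis
  then have "\<phi> t \<noteq> 0 \<and> \<psi> t ^ 3 = - (sqrt 3 / 2) * (\<phi> t)\<^sup>2" if "t \<in> I" for t
    using Dmat_conjugate_profile_equation[OF g(1)] detQ eq3 that by metis
  with sol obtain t0 where "t0 \<notin> I" "\<And>t. t \<in> I \<Longrightarrow>
      \<phi> t = - ((t - t0) ^ 3 / (18 * sqrt 3)) \<and> \<psi> t = - ((t - t0)\<^sup>2 / (6 * sqrt 3))"
    using cone_profile_ode[OF I_int, of \<phi> \<psi>] by metis
  with g(1) sol show ?thesis by metis
qed

theorem mainTheorem10:
  fixes I :: "real set" and Q P :: "real \<Rightarrow> mat4"
  assumes I_open: "open I" and I_int: "is_interval I" and I_ne: "I \<noteq> {}"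
    and QS: "\<forall>t\<in>I. Q t \<in> S20" and PS: "\<forall>t\<in>I. P t \<in> S20"
    and Qsm: "smooth_on I Q" and Psm: "smooth_on I P"
    and detQ: "\<forall>t\<in>I. det (Q t) < 0"
    and eq1: "\<forall>t\<in>I. (Q has_vector_derivative P t) (at t)"
    and eq2: "\<forall>t\<in>I. ((\<lambda>s. tracefree (P s ** P s)) has_vector_derivative
                 (- (4 / sqrt (- det (Q t)))) *\<^sub>R tracefree (adjugate (Q t))) (at t)"
    and eq3: "\<forall>t\<in>I. trace (P t ** P t ** P t) = 12 * sqrt (- det (Q t))"
  shows "(\<exists>V. subspace V \<and> V \<subseteq> S20 \<and> dim V = 1 \<and> (\<forall>t\<in>I. Q t \<in> V)) \<longleftrightarrow>
         (\<exists>g\<in>SO4. \<exists>t0. t0 \<notin> I \<and>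
            (\<forall>t\<in>I. Q t = (- ((t - t0) ^ 3 / (18 * sqrt 3))) *\<^sub>R (g ** Dmat ** transpose g) \<and>
                    P t = (- ((t - t0) ^ 2 / (6 * sqrt 3))) *\<^sub>R (g ** Dmat ** transpose g)))"
proof
  assume "\<exists>V. subspace V \<and> V \<subseteq> S20 \<and> dim V = 1 \<and> (\<forall>t\<in>I. Q t \<in> V)"
  then obtain V where "dim V = 1" "\<forall>t\<in>I. Q t \<in> V" by blast
  moreover obtain B where "V \<subseteq> span B" "card B = dim V" using basis_exists by blast
  ultimately obtain A where "\<forall>t\<in>I. Q t \<in> span {A}" by (metis card_1_singletonE subsetD)
  from collinear_solution_is_cone[OF I_open I_int I_ne QS detQ eq1 eq2 eq3 this]
  show "\<exists>g\<in>SO4. \<exists>t0. t0 \<notin> I \<and>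
      (\<forall>t\<in>I. Q t = (- ((t - t0) ^ 3 / (18 * sqrt 3))) *\<^sub>R (g ** Dmat ** transpose g) \<and>
              P t = (- ((t - t0) ^ 2 / (6 * sqrt 3))) *\<^sub>R (g ** Dmat ** transpose g))" .
next
  assume "\<exists>g\<in>SO4. \<exists>t0. t0 \<notin> I \<and>
      (\<forall>t\<in>I. Q t = (- ((t - t0) ^ 3 / (18 * sqrt 3))) *\<^sub>R (g ** Dmat ** transpose g) \<and>
              P t = (- ((t - t0) ^ 2 / (6 * sqrt 3))) *\<^sub>R (g ** Dmat ** transpose g))"
  then obtain g where "g \<in> SO4" "\<forall>t\<in>I. Q t \<in> span {g ** Dmat ** transpose g}"
    by (metis span_base span_mul singletonI)
  then show "\<exists>V. subspace V \<and> V \<subseteq> S20 \<and> dim V = 1 \<and> (\<forall>t\<in>I. Q t \<in> V)"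
    using SO4_conjugate_Dmat_line by blast
qed

end
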